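(* Let $N,n_{\mathrm{el}}\ge1$, masses $m_1,\dots,m_N>0$, $M=\mathrm{diag}(m_1I_3,\dots,m_NI_3)$, $V_{\mathrm{ext}}:\mathbb{R}^{3N}\to\mathbb{R}$ continuously differentiable, $h>0$. For $i=1,\dots,n_{\mathrm{el}}$ let $k_i>0$, $l_{0,i}>0$, $a_{ij}\in\mathbb{R}$, define $\tilde C_i(q)=\frac{\bar q_i\cdot\bar q_i}{l_{0,i}^2}$ with $\bar q_i=\sum_{j=1}^Na_{ij}q_j$ ($q=(q_1,\dots,q_N)$, $q_j\in\mathbb{R}^3$), $V_{\mathrm{int},i}(c)=\frac{k_il_{0,i}}{4}(c-\ln c-1)$ for $c>0$. Define the midpoint (Gonzalez) discrete gradient $\overline{\nabla}V_{\mathrm{ext}}(q,q')=\nabla V_{\mathrm{ext}}(\tfrac{q+q'}2)+\frac{V_{\mathrm{ext}}(q')-V_{\mathrm{ext}}(q)-\nabla V_{\mathrm{ext}}(\frac{q+q'}2)\cdot(q'-q)}{|q'-q|^2}(q'-q)$ for $q'\neq q$ and $\nabla V_{\mathrm{ext}}(q)$ for $q'=q$, and the Greenspan discrete derivative $\overline{\nabla}V_{\mathrm{int}}(C,C')$ componentwise by $\frac{V_{\mathrm{int},i}(C_i')-V_{\mathrm{int},i}(C_i)}{C_i'-C_i}$ if $C_i'\ne C_i$ and $V_{\mathrm{int},i}'(\frac{C_i+C_i'}2)$ otherwise. Suppose $(q^n,v^n,C^n)$, $(q^{n+1},v^{n+1},C^{n+1})$ (positive strains) satisfy, with midpoint values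 $x^{n+1/2}=\frac12(x^n+x^{n+1})$, $$q^{n+1}-q^n=h\,v^{n+1/2},\quad M(v^{n+1}-v^n)=-h\big(\overline{\nabla}V_{\mathrm{ext}}(q^n,q^{n+1})+D\tilde C(q^{n+1/2})^{\mathrm T}\overline{\nabla}V_{\mathrm{int}}(C^n,C^{n+1})\big),\quad C^{n+1}-C^n=h\,D\tilde C(q^{n+1/2})v^{n+1/2}.$$ Let $L^m=\sum_{k=1}^Nq_k^m\times m_kv_k^m$ for $m=n,n+1$. If there is $\bar b\in\mathbb{R}^3$ such that the $k$-th three-dimensional block of $\overline{\nabla}V_{\mathrm{ext}}(q^n,q^{n+1})$ equals $-\bar b$ for every $k=1,\dots,N$, then $(L^{n+1}-L^n)\cdot\bar b=0$.
   Context: $D\tilde C(q)$ is the Jacobian of $\tilde C=(\tilde C_1,\dots,\tilde C_{n_{\mathrm{el}}})$. The scheme is the input-free midpoint discrete-gradient time discretization of the port-Hamiltonian model of $N$ point masses connected by $n_{\mathrm{el}}$ hyperelastic springs, with state (positions $q$, velocities $v$, strains $C$). *)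

theory Defs
  imports "HOL-Analysis.Analysis" "HOL-Analysis.Cross3"
begin

text \<open>Particles are indexed by a finite type 'n (N = CARD('n)), springs by a finite
type 'e (n_el = CARD('e)). A configuration q in R^{3N} is an element of real^3^'n,
whose k-th block q$k is the position of particle k.\<close>

definition qbar :: "('e \<Rightarrow> 'n::finite \<Rightarrow> real) \<Rightarrow> 'e \<Rightarrow> real^3^'n \<Rightarrow> real^3" where
  "qbar a i q = (\<Sum>j\<in>UNIV. a i j *\<^sub>R (q $ j))"

definition Ctilde :: "('e::finite \<Rightarrow> real) \<Rightarrow> ('e \<Rightarrow> 'n::finite \<Rightarrow> real) \<Rightarrow> real^3^'n \<Rightarrow> real^'e" where
  "Ctilde l0 a q = (\<chi> i. (qbar a i q \<bullet> qbar a i q) / (l0 i)^2)"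

text \<open>Jacobian D Ctilde(q) applied to a vector w (entry i: sum_j dC_i/dq_j . w_j).\<close>
definition DCt :: "('e::finite \<Rightarrow> real) \<Rightarrow> ('e \<Rightarrow> 'n::finite \<Rightarrow> real) \<Rightarrow> real^3^'n \<Rightarrow> real^3^'n \<Rightarrow> real^'e" where
  "DCt l0 a q w = (\<chi> i. \<Sum>j\<in>UNIV. (2 * a i j / (l0 i)^2) *\<^sub>R qbar a i q \<bullet> (w $ j))"

text \<open>Transposed Jacobian D Ctilde(q)^T applied to y in R^{n_el}.\<close>
definition DCtT :: "('e::finite \<Rightarrow> real) \<Rightarrow> ('e \<Rightarrow> 'n::finite \<Rightarrow> real) \<Rightarrow> real^3^'n \<Rightarrow> real^'e \<Rightarrow> real^3^'n" where
  "DCtT l0 a q y = (\<chi> j. \<Sum>i\<in>UNIV. (y $ i * (2 * a i j / (l0 i)^2)) *\<^sub>R qbar a i q)"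

definition Vint :: "('e \<Rightarrow> real) \<Rightarrow> ('e \<Rightarrow> real) \<Rightarrow> 'e \<Rightarrow> real \<Rightarrow> real" where
  "Vint kk l0 i c = kk i * l0 i / 4 * (c - ln c - 1)"

definition dgrad_ext :: "('v::real_inner \<Rightarrow> real) \<Rightarrow> ('v \<Rightarrow> 'v) \<Rightarrow> 'v \<Rightarrow> 'v \<Rightarrow> 'v" where
  "dgrad_ext V gV q q' =
     (if q' = q then gV q
      else gV ((1/2) *\<^sub>R (q + q')) +
        ((V q' - V q - gV ((1/2) *\<^sub>R (q + q')) \<bullet> (q' - q)) / (norm (q' - q))^2) *\<^sub>R (q' - q))"

definition dgrad_int :: "('e::finite \<Rightarrow> real) \<Rightarrow> ('e \<Rightarrow> real) \<Rightarrow> real^'e \<Rightarrow> real^'e \<Rightarrow> real^'e" where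
  "dgrad_int kk l0 C C' = (\<chi> i.
     if C' $ i \<noteq> C $ i then (Vint kk l0 i (C' $ i) - Vint kk l0 i (C $ i)) / (C' $ i - C $ i)
     else deriv (Vint kk l0 i) ((C $ i + C' $ i) / 2))"

definition ang_mom :: "('n::finite \<Rightarrow> real) \<Rightarrow> real^3^'n \<Rightarrow> real^3^'n \<Rightarrow> real^3" where
  "ang_mom m q v = (\<Sum>k\<in>UNIV. cross3 (q $ k) (m k *\<^sub>R (v $ k)))"

end

theory Submission
  imports Defs
begin

(* Since q' - q = h v^{n+1/2} is parallel to the midpoint velocity, the increment of angular
   momentum is the torque sum_k s_k x m_k (v'_k - v_k) of the discrete forces about the midpoint
   configuration s = q^{n+1/2}.  The spring forces DC(s)^T y exert no torque: spring i pushes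
   particle k along a_ik qbar_i(s), and sum_k s_k x a_ik qbar_i(s) = qbar_i(s) x qbar_i(s) = 0.
   What remains is h (sum_k s_k) x b, which is orthogonal to b. *)

lemma cross3_sum_left: "finite A \<Longrightarrow> cross3 (sum f A) y = (\<Sum>i\<in>A. cross3 (f i) y)"
  by (induction A rule: finite_induct) (auto simp: cross_add_left)

lemma cross3_sum_right: "finite A \<Longrightarrow> cross3 y (sum f A) = (\<Sum>i\<in>A. cross3 y (f i))"
  by (induction A rule: finite_induct) (auto simp: cross_add_right)

lemma cross3_diff_midpoint:
  fixes x x' u u' :: "real^3"
  shows "cross3 x' u' - cross3 x u
    = cross3 ((1/2) *\<^sub>R (x + x')) (u' - u) + cross3 (x' - x) ((1/2) *\<^sub>R (u + u'))"
  by (simp add: cross3_simps forall_3) (simp add: field_simps)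

lemma cross3_diff_midpoint_parallel:
  fixes x x' w w' :: "real^3"
  assumes "x' - x = h *\<^sub>R ((1/2) *\<^sub>R (w + w'))"
  shows "cross3 x' (c *\<^sub>R w') - cross3 x (c *\<^sub>R w)
    = cross3 ((1/2) *\<^sub>R (x + x')) (c *\<^sub>R (w' - w))"
proof -
  have "cross3 (x' - x) ((1/2) *\<^sub>R (c *\<^sub>R w + c *\<^sub>R w'))
      = (h * c) *\<^sub>R cross3 ((1/2) *\<^sub>R (w + w')) ((1/2) *\<^sub>R (w + w'))"
    unfolding assms by (simp add: cross_mult_left cross_mult_right scaleR_add_right[symmetric])
  then show ?thesis
    by (simp add: cross3_diff_midpoint scaleR_diff_right)
qed

lemma ang_mom_diff_midpoint:
  assumes "q' - q = h *\<^sub>R ((1/2) *\<^sub>R (v + v'))"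
  shows "ang_mom m q' v' - ang_mom m q v
    = (\<Sum>k\<in>UNIV. cross3 (((1/2) *\<^sub>R (q + q')) $ k) (m k *\<^sub>R (v' $ k - v $ k)))"
proof -
  have "cross3 (q' $ k) (m k *\<^sub>R v' $ k) - cross3 (q $ k) (m k *\<^sub>R v $ k)
      = cross3 (((1/2) *\<^sub>R (q + q')) $ k) (m k *\<^sub>R (v' $ k - v $ k))" for k
  proof -
    have "q' $ k - q $ k = h *\<^sub>R ((1/2) *\<^sub>R (v $ k + v' $ k))"
      using arg_cong[OF assms, of "\<lambda>x. x $ k"]
      by (simp only: vector_minus_component vector_scaleR_component vector_add_component)
    from cross3_diff_midpoint_parallel[OF this] show ?thesis
      by simp
  qed
  then show ?thesis
    unfolding ang_mom_def sum_subtractf[symmetric] by simp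
qed

lemma sum_cross3_DCtT_eq_0:
  "(\<Sum>k\<in>UNIV. cross3 (s $ k) (DCtT l0 a s y $ k)) = 0"
proof -
  define c where "c i = y $ i * (2 / (l0 i)^2)" for i
  have "(\<Sum>k\<in>UNIV. cross3 (s $ k) (DCtT l0 a s y $ k))
      = (\<Sum>k\<in>UNIV. \<Sum>i\<in>UNIV. c i *\<^sub>R cross3 (a i k *\<^sub>R s $ k) (qbar a i s))"
    by (simp add: DCtT_def c_def cross3_sum_right cross_mult_right cross_mult_left algebra_simps)
  also have "\<dots> = (\<Sum>i\<in>UNIV. c i *\<^sub>R cross3 (\<Sum>k\<in>UNIV. a i k *\<^sub>R s $ k) (qbar a i s))"
    by (subst sum.swap) (simp add: cross3_sum_left scaleR_sum_right)
  also have "\<dots> = 0"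
    by (simp add: qbar_def[symmetric])
  finally show ?thesis .
qed

theorem mainTheorem4:
  fixes m :: "'n::finite \<Rightarrow> real"
    and V :: "real^3^'n \<Rightarrow> real" and gV :: "real^3^'n \<Rightarrow> real^3^'n"
    and h :: real
    and kk l0 :: "'e::finite \<Rightarrow> real" and a :: "'e \<Rightarrow> 'n \<Rightarrow> real"
    and q q' v v' :: "real^3^'n" and C C' :: "real^'e"
    and b :: "real^3"
  assumes m_pos: "\<And>k. m k > 0"
    and V_grad: "\<And>x. (V has_derivative (\<lambda>w. gV x \<bullet> w)) (at x)"
    and gV_cont: "continuous_on UNIV gV"
    and h_pos: "h > 0"
    and k_pos: "\<And>i. kk i > 0" and l0_pos: "\<And>i. l0 i > 0"
    and C_pos: "\<And>i. C $ i > 0" and C'_pos: "\<And>i. C' $ i > 0"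
    and eq_q: "q' - q = h *\<^sub>R ((1/2) *\<^sub>R (v + v'))"
    and eq_v: "(\<chi> k. m k *\<^sub>R (v' $ k - v $ k)) =
               - h *\<^sub>R (dgrad_ext V gV q q' +
                   DCtT l0 a ((1/2) *\<^sub>R (q + q')) (dgrad_int kk l0 C C'))"
    and eq_C: "C' - C = h *\<^sub>R DCt l0 a ((1/2) *\<^sub>R (q + q')) ((1/2) *\<^sub>R (v + v'))"
    and blocks: "\<And>k. dgrad_ext V gV q q' $ k = - b"
  shows "(ang_mom m q' v' - ang_mom m q v) \<bullet> b = 0"
proof -
  define s where "s = (1/2) *\<^sub>R (q + q')"
  define F where "F = DCtT l0 a s (dgrad_int kk l0 C C')"
  have impulse: "m k *\<^sub>R (v' $ k - v $ k) = h *\<^sub>R b - h *\<^sub>R F $ k" for k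
    using arg_cong[OF eq_v, of "\<lambda>x. x $ k"] blocks[of k]
    by (simp add: F_def s_def algebra_simps)
  have "ang_mom m q' v' - ang_mom m q v = (\<Sum>k\<in>UNIV. cross3 (s $ k) (h *\<^sub>R b - h *\<^sub>R F $ k))"
    using ang_mom_diff_midpoint[OF eq_q] by (simp add: s_def impulse)
  also have "\<dots> = h *\<^sub>R cross3 (\<Sum>k\<in>UNIV. s $ k) b - h *\<^sub>R (\<Sum>k\<in>UNIV. cross3 (s $ k) (F $ k))"
    by (simp add: Cross3.right_diff_distrib cross_mult_right sum_subtractf scaleR_sum_right cross3_sum_left)
  also have "\<dots> = h *\<^sub>R cross3 (\<Sum>k\<in>UNIV. s $ k) b"
    by (simp add: F_def sum_cross3_DCtT_eq_0)
  finally show ?thesis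
    by (simp add: dot_cross_self)
qed

end
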